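(* Fix an outer iteration $k$ of SREDA and the inner procedure described in the context. Let $g(y)=-f(x_{k+1},y)$ and $\hat u_{k,t}=-\tilde u_{k,t}$. Then for any $t\ge1$, $$\mathbb{E}\|\nabla g(\tilde y_{k,t})-\hat u_{k,t}\|^2=\mathbb{E}\|\nabla g(\tilde y_{k,0})-\hat u_{k,0}\|^2-\sum_{j=1}^t\mathbb{E}\|\nabla g(\tilde y_{k,j})-\nabla g(\tilde y_{k,j-1})\|^2+\sum_{j=1}^t\mathbb{E}\|\hat u_{k,j}-\hat u_{k,j-1}\|^2.$$
   Context: Problem: $f(x,y)=\mathbb{E}[F(x,y;\xi)]$ on $\mathbb{R}^{d_1}\times\mathbb{R}^{d_2}$ with (A2) $\mathbb{E}\|\nabla F(x,y;\xi)-\nabla F(x',y';\xi)\|^2\le\ell^2(\|x-x'\|^2+\|y-y'\|^2)$, (A3) $F(x,\cdot;\xi)$ concave for each $\xi,x$, (A4) $f(x,\cdot)$ $\mu$-strongly concave, and also $\max_yf(\cdot,y)$ bounded below and $\mathbb{E}\|\nabla F-\nabla f\|^2\le\sigma^2$. $G_x=\nabla_xF$, $G_y=\nabla_yF$; samples are i.i.d. copies of $\xi$ independent of everything else. Inner procedure at outer iteration $k$ (step size $\lambda>0$, batch size $S_2$, integer $m$): given $x_k,y_k$, estimates $v_k,u_k$ and $x_{k+1}$, set $\tilde x_{k,-1}=x_k,\tilde y_{k,-1}=y_k,\tilde v_{k,-1}=v_k,\tilde u_{k,-1}=u_k,\tilde x_{k,0}=x_{k+1},\tilde y_{k,0}=y_k$;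 for $t=0,\dots,m+1$ draw $S_2$ fresh samples $\xi_{t,i}$ and set $\tilde v_{k,t}=\tilde v_{k,t-1}+\frac1{S_2}\sum_i[G_x(\tilde x_{k,t},\tilde y_{k,t};\xi_{t,i})-G_x(\tilde x_{k,t-1},\tilde y_{k,t-1};\xi_{t,i})]$, $\tilde u_{k,t}=\tilde u_{k,t-1}+\frac1{S_2}\sum_i[G_y(\tilde x_{k,t},\tilde y_{k,t};\xi_{t,i})-G_y(\tilde x_{k,t-1},\tilde y_{k,t-1};\xi_{t,i})]$, $\tilde x_{k,t+1}=\tilde x_{k,t}$, $\tilde y_{k,t+1}=\tilde y_{k,t}+\lambda\tilde u_{k,t}$. *)

theory Defs
  imports "HOL-Probability.Probability"
begin

definition pop_obj :: "'xi measure \<Rightarrow> ('a \<Rightarrow> 'b \<Rightarrow> 'xi \<Rightarrow> real) \<Rightarrow> 'a \<Rightarrow> 'b \<Rightarrow> real" where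
  "pop_obj D F x y = (\<integral>\<xi>. F x y \<xi> \<partial>D)"

text \<open>The state index n corresponds to t = n - 1, i.e. n = 0 is t = -1.
  The state is (x~_t, y~_t, v~_t, u~_t).  The samples used at inner step t are
  xs t i, i < S2.\<close>
primrec sreda_inner_state ::
  "('a::real_vector \<Rightarrow> 'b::real_vector \<Rightarrow> 'xi \<Rightarrow> 'a) \<Rightarrow> ('a \<Rightarrow> 'b \<Rightarrow> 'xi \<Rightarrow> 'b) \<Rightarrow> real \<Rightarrow> nat
   \<Rightarrow> (nat \<Rightarrow> nat \<Rightarrow> 'xi) \<Rightarrow> 'a \<Rightarrow> 'b \<Rightarrow> 'a \<Rightarrow> 'b \<Rightarrow> 'a \<Rightarrow> nat \<Rightarrow> 'a \<times> 'b \<times> 'a \<times> 'b" where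
  "sreda_inner_state Gx Gy lam S2 xs xk yk vk uk xk1 0 = (xk, yk, vk, uk)"
| "sreda_inner_state Gx Gy lam S2 xs xk yk vk uk xk1 (Suc n) =
     (let (xp, yp, vp, up) = sreda_inner_state Gx Gy lam S2 xs xk yk vk uk xk1 n;
          xn = (if n = 0 then xk1 else xp);
          yn = (if n = 0 then yk else yp + lam *\<^sub>R up);
          vn = vp + (1 / real S2) *\<^sub>R (\<Sum>i<S2. Gx xn yn (xs n i) - Gx xp yp (xs n i));
          un = up + (1 / real S2) *\<^sub>R (\<Sum>i<S2. Gy xn yn (xs n i) - Gy xp yp (xs n i))
      in (xn, yn, vn, un))"

definition sreda_y where
  "sreda_y Gx Gy lam S2 xs xk yk vk uk xk1 t =
     fst (snd (sreda_inner_state Gx Gy lam S2 xs xk yk vk uk xk1 (Suc t)))"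

definition sreda_u where
  "sreda_u Gx Gy lam S2 xs xk yk vk uk xk1 t =
     snd (snd (snd (sreda_inner_state Gx Gy lam S2 xs xk yk vk uk xk1 (Suc t))))"

end

theory Submission
  imports Defs
begin

text \<open>Write x' = x_{k+1} and let e_t = u_t - \<nabla>_y f(x', y_t) be the error of the gradient
  estimate, so that grad_g(y_t) - uhat_t = e_t. With the increments \<Delta>_t = u_{t+1} - u_t and
  \<delta>_t = \<nabla>_y f(x', y_{t+1}) - \<nabla>_y f(x', y_t) we have e_{t+1} = e_t + \<Delta>_t - \<delta>_t, hence
  |e_{t+1}|^2 = |e_t|^2 + |\<Delta>_t|^2 - |\<delta>_t|^2 + 2 (e_t - \<delta>_t)\<bullet>(\<Delta>_t - \<delta>_t),
  and summing expectations over t gives the claim once the cross term is shown to have mean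
  zero. It does, because \<Delta>_t - \<delta>_t is an average of terms G_y(x', y, \<xi>) - \<nabla>_y f(x', y) at
  fresh samples \<xi> = \<xi>_{t+1,i}, which are independent of the initial data and of all earlier
  samples, hence of e_t, \<delta>_t and y \<in> {y_t, y_{t+1}}; and G_y is unbiased.

  Unbiasedness is not among the hypotheses. It follows from the concavity of F(x,\<cdot>;\<xi>), which
  squeezes the increment of F along a segment between the tangents at its two ends, and from
  the mean-square Lipschitz bound (A2), which makes the squeeze uniform after taking
  expectations; together they allow differentiation under the expectation. The bounds (A2)
  and (var) also make every quantity in the identity square integrable.\<close>

lemma borel_measurable_fst':
  fixes f :: "'a \<Rightarrow> 'b::second_countable_topology \<times> 'c::second_countable_topology"
  assumes "f \<in> borel_measurable M"
  shows "(\<lambda>\<omega>. fst (f \<omega>)) \<in> borel_measurable M"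
proof -
  have "fst \<in> borel_measurable (borel :: ('b \<times> 'c) measure)"
    by (subst borel_prod[symmetric]) (rule measurable_fst)
  from measurable_compose[OF assms this] show ?thesis .
qed

lemma borel_measurable_snd':
  fixes f :: "'a \<Rightarrow> 'b::second_countable_topology \<times> 'c::second_countable_topology"
  assumes "f \<in> borel_measurable M"
  shows "(\<lambda>\<omega>. snd (f \<omega>)) \<in> borel_measurable M"
proof -
  have "snd \<in> borel_measurable (borel :: ('b \<times> 'c) measure)"
    by (subst borel_prod[symmetric]) (rule measurable_snd)
  from measurable_compose[OF assms this] show ?thesis .
qed

lemma has_derivative_partial_snd:
  assumes "((\<lambda>(x', y'). \<phi> x' y') has_derivative (\<lambda>(h1, h2). a \<bullet> h1 + b \<bullet> h2)) (at (x, y))"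
  shows "((\<lambda>y'. \<phi> x y') has_derivative (\<lambda>h. b \<bullet> h)) (at y)"
proof -
  have "((\<lambda>y'. (x, y')) has_derivative (\<lambda>h. (0, h))) (at y)"
    by (auto intro!: derivative_eq_intros)
  from has_derivative_compose[OF this assms] show ?thesis by (simp add: o_def)
qed

lemma directional_derivative_tendsto:
  fixes g :: "'b::real_normed_vector \<Rightarrow> real"
  assumes g: "(g has_derivative g') (at y)"
  shows "((\<lambda>\<tau>. (g (y + \<tau> *\<^sub>R v) - g y) / \<tau>) \<longlongrightarrow> g' v) (at 0)"
proof -
  have line: "((\<lambda>\<tau>::real. y + \<tau> *\<^sub>R v) has_derivative (\<lambda>\<tau>. \<tau> *\<^sub>R v)) (at 0)"
    by (auto intro!: derivative_eq_intros)
  have "(g has_derivative g') (at (y + 0 *\<^sub>R v))" using g by simp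
  from has_derivative_compose[OF line this]
  have "((\<lambda>\<tau>::real. g (y + \<tau> *\<^sub>R v)) has_derivative (\<lambda>\<tau>. g' (\<tau> *\<^sub>R v))) (at 0)"
    by (simp add: o_def)
  moreover have "(\<lambda>\<tau>. g' (\<tau> *\<^sub>R v)) = (*) (g' v)"
    using has_derivative_linear[OF g] by (auto simp: linear_scale fun_eq_iff)
  ultimately have "((\<lambda>\<tau>::real. g (y + \<tau> *\<^sub>R v)) has_field_derivative g' v) (at 0)"
    by (simp add: has_field_derivative_def)
  then show ?thesis by (simp add: has_field_derivative_iff)
qed

lemma concave_on_le_tangent:
  fixes g :: "'b::real_normed_vector \<Rightarrow> real"
  assumes c: "concave_on UNIV g" and g: "(g has_derivative g') (at y)"
  shows "g z \<le> g y + g' (z - y)"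
proof -
  have lim: "((\<lambda>\<tau>. (g (y + \<tau> *\<^sub>R (z - y)) - g y) / \<tau>) \<longlongrightarrow> g' (z - y)) (at_right 0)"
    using directional_derivative_tendsto[OF g] by (rule filterlim_mono) (simp_all add: at_within_le_at)
  have "eventually (\<lambda>\<tau>. g z - g y \<le> (g (y + \<tau> *\<^sub>R (z - y)) - g y) / \<tau>) (at_right 0)"
    using eventually_at_right_real[of "0::real" 1, OF zero_less_one]
  proof eventually_elim
    case (elim \<tau>)
    then have \<tau>: "0 < \<tau>" "\<tau> < 1" by auto
    have "(1 - \<tau>) * g y + \<tau> * g z \<le> g ((1 - \<tau>) *\<^sub>R y + \<tau> *\<^sub>R z)"
      using concave_onD[OF c, of \<tau> y z] \<tau> by simp
    moreover have "(1 - \<tau>) *\<^sub>R y + \<tau> *\<^sub>R z = y + \<tau> *\<^sub>R (z - y)"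
      by (simp add: algebra_simps)
    ultimately have "\<tau> * (g z - g y) \<le> g (y + \<tau> *\<^sub>R (z - y)) - g y"
      by (simp add: algebra_simps)
    then show ?case using \<tau> by (simp add: pos_le_divide_eq mult.commute)
  qed
  from tendsto_lowerbound[OF lim this] show ?thesis by simp
qed

lemma norm_sq_add_diff:
  fixes e a d :: "'v::real_inner"
  shows "(norm (e + a - d))^2 = (norm e)^2 + (norm a)^2 - (norm d)^2 + 2 * ((e - d) \<bullet> (a - d))"
  by (simp add: power2_norm_eq_inner inner_add_left inner_add_right inner_diff_left inner_diff_right
      inner_commute algebra_simps)

lemma (in prob_space) nn_integral_norm_le_of_nn_integral_sq_le:
  fixes f :: "'a \<Rightarrow> 'v::real_normed_vector"
  assumes f: "f \<in> borel_measurable M"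
    and sq: "(\<integral>\<^sup>+\<omega>. ennreal (norm (f \<omega>)^2) \<partial>M) \<le> ennreal (c^2)" and c: "0 \<le> c"
  shows "(\<integral>\<^sup>+\<omega>. ennreal (norm (f \<omega>)) \<partial>M) \<le> ennreal c"
proof -
  have "(\<integral>\<^sup>+\<omega>. ennreal (norm (f \<omega>)) * 1 \<partial>M)\<^sup>2
      \<le> (\<integral>\<^sup>+\<omega>. ennreal (norm (f \<omega>)) ^ 2 \<partial>M) * (\<integral>\<^sup>+\<omega>. 1 ^ 2 \<partial>M)"
    by (rule Cauchy_Schwarz_nn_integral) (use f in auto)
  also have "(\<integral>\<^sup>+\<omega>. ennreal (norm (f \<omega>)) ^ 2 \<partial>M) = (\<integral>\<^sup>+\<omega>. ennreal (norm (f \<omega>)^2) \<partial>M)"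
    by (simp add: ennreal_power)
  also have "(\<integral>\<^sup>+\<omega>. 1 ^ 2 \<partial>M) = 1" by (simp add: emeasure_space_1)
  finally have le: "(\<integral>\<^sup>+\<omega>. ennreal (norm (f \<omega>)) \<partial>M)\<^sup>2 \<le> ennreal (c^2)" using sq by simp
  show ?thesis
  proof (cases "(\<integral>\<^sup>+\<omega>. ennreal (norm (f \<omega>)) \<partial>M)" rule: ennreal_cases)
    case (real r)
    with le c have "r \<le> c" by (auto simp add: ennreal_power ennreal_le_iff2)
    then show ?thesis using real by simp
  next
    case top
    with le show ?thesis by (simp add: top_unique)
  qed
qed

section \<open>Square-integrable random variables\<close>

definition L2 :: "'a measure \<Rightarrow> ('a \<Rightarrow> 'v::{real_normed_vector, second_countable_topology}) \<Rightarrow> bool" where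
  "L2 M f \<longleftrightarrow> f \<in> borel_measurable M \<and> integrable M (\<lambda>\<omega>. (norm (f \<omega>))^2)"

context finite_measure
begin

lemma L2_borel_measurable: "L2 M f \<Longrightarrow> f \<in> borel_measurable M"
  by (simp add: L2_def)

lemma L2_integrable_sq: "L2 M f \<Longrightarrow> integrable M (\<lambda>\<omega>. (norm (f \<omega>))^2)"
  by (simp add: L2_def)

lemma L2I_nn_integral:
  fixes f :: "'a \<Rightarrow> 'v::{real_normed_vector, second_countable_topology}"
  assumes "f \<in> borel_measurable M" and "(\<integral>\<^sup>+\<omega>. ennreal ((norm (f \<omega>))^2) \<partial>M) < \<infinity>"
  shows "L2 M f"
  unfolding L2_def integrable_iff_bounded using assms by auto

lemma L2_const: "L2 M (\<lambda>\<omega>. c)"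
  by (simp add: L2_def)

lemma L2_affine_bound:
  fixes f :: "'a \<Rightarrow> 'v::{real_normed_vector, second_countable_topology}"
    and g :: "'a \<Rightarrow> 'u::{real_normed_vector, second_countable_topology}"
  assumes f: "L2 M f" and g [measurable]: "g \<in> borel_measurable M"
    and bound: "\<And>\<omega>. \<omega> \<in> space M \<Longrightarrow> norm (g \<omega>) \<le> a + c * norm (f \<omega>)"
  shows "L2 M g"
proof -
  have "integrable M (\<lambda>\<omega>. (norm (g \<omega>))^2)"
  proof (rule Bochner_Integration.integrable_bound)
    show "integrable M (\<lambda>\<omega>. 2 * a^2 + 2 * c^2 * (norm (f \<omega>))^2)"
      using f unfolding L2_def by (intro Bochner_Integration.integrable_add integrable_mult_right) auto
    show "AE \<omega> in M. norm ((norm (g \<omega>))^2) \<le> norm (2 * a^2 + 2 * c^2 * (norm (f \<omega>))^2)"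
    proof (rule AE_I2)
      fix \<omega> assume "\<omega> \<in> space M"
      then have "(norm (g \<omega>))^2 \<le> (a + c * norm (f \<omega>))^2"
        using bound by (intro power_mono) auto
      also have "\<dots> \<le> 2 * a^2 + 2 * c^2 * (norm (f \<omega>))^2"
        using sum_squares_bound[of a "c * norm (f \<omega>)"] by (simp add: power2_eq_square algebra_simps)
      finally show "norm ((norm (g \<omega>))^2) \<le> norm (2 * a^2 + 2 * c^2 * (norm (f \<omega>))^2)"
        by simp
    qed
  qed measurable
  then show ?thesis by (simp add: L2_def)
qed

lemma L2_Pair:
  assumes "L2 M f" and "L2 M g"
  shows "L2 M (\<lambda>\<omega>. (f \<omega>, g \<omega>))"
proof -
  have "integrable M (\<lambda>\<omega>. (norm (f \<omega>))^2 + (norm (g \<omega>))^2)"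
    using assms unfolding L2_def by auto
  moreover have "(norm (f \<omega>, g \<omega>))^2 = (norm (f \<omega>))^2 + (norm (g \<omega>))^2" for \<omega>
    by (simp add: norm_Pair)
  ultimately show ?thesis using assms unfolding L2_def by (auto intro: borel_measurable_Pair)
qed

lemma L2_fst:
  fixes f :: "'a \<Rightarrow> 'v::{real_normed_vector, second_countable_topology} \<times> 'u::{real_normed_vector, second_countable_topology}"
  assumes "L2 M f" shows "L2 M (\<lambda>\<omega>. fst (f \<omega>))"
proof (rule L2_affine_bound[OF assms, where a=0 and c=1])
  show "(\<lambda>\<omega>. fst (f \<omega>)) \<in> borel_measurable M"
    using assms by (intro borel_measurable_fst') (simp add: L2_def)
  show "norm (fst (f \<omega>)) \<le> 0 + 1 * norm (f \<omega>)" for \<omega>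
    by (metis norm_fst_le prod.collapse mult_1 add_0)
qed

lemma L2_snd:
  fixes f :: "'a \<Rightarrow> 'v::{real_normed_vector, second_countable_topology} \<times> 'u::{real_normed_vector, second_countable_topology}"
  assumes "L2 M f" shows "L2 M (\<lambda>\<omega>. snd (f \<omega>))"
proof (rule L2_affine_bound[OF assms, where a=0 and c=1])
  show "(\<lambda>\<omega>. snd (f \<omega>)) \<in> borel_measurable M"
    using assms by (intro borel_measurable_snd') (simp add: L2_def)
  show "norm (snd (f \<omega>)) \<le> 0 + 1 * norm (f \<omega>)" for \<omega>
    by (metis norm_snd_le prod.collapse mult_1 add_0)
qed

lemma L2_add:
  fixes f g :: "'a \<Rightarrow> 'v::{real_normed_vector, second_countable_topology}"
  assumes "L2 M f" and "L2 M g"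
  shows "L2 M (\<lambda>\<omega>. f \<omega> + g \<omega>)"
proof (rule L2_affine_bound[OF L2_Pair[OF assms], where a=0 and c=2])
  show "(\<lambda>\<omega>. f \<omega> + g \<omega>) \<in> borel_measurable M"
    using assms by (auto simp: L2_def)
  fix \<omega>
  have "norm (f \<omega> + g \<omega>) \<le> norm (f \<omega>) + norm (g \<omega>)" by (rule norm_triangle_ineq)
  also have "\<dots> \<le> 2 * norm (f \<omega>, g \<omega>)"
    using norm_fst_le[of "f \<omega>" "g \<omega>"] norm_snd_le[of "g \<omega>" "f \<omega>"] by linarith
  finally show "norm (f \<omega> + g \<omega>) \<le> 0 + 2 * norm (f \<omega>, g \<omega>)" by simp
qed

lemma L2_scaleR:
  fixes f :: "'a \<Rightarrow> 'v::{real_normed_vector, second_countable_topology}"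
  assumes "L2 M f" shows "L2 M (\<lambda>\<omega>. c *\<^sub>R f \<omega>)"
  by (rule L2_affine_bound[OF assms, where a=0 and c="\<bar>c\<bar>"]) (use assms in \<open>auto simp: L2_def\<close>)

lemma L2_diff:
  fixes f g :: "'a \<Rightarrow> 'v::{real_normed_vector, second_countable_topology}"
  assumes "L2 M f" and "L2 M g"
  shows "L2 M (\<lambda>\<omega>. f \<omega> - g \<omega>)"
  using L2_add[OF assms(1) L2_scaleR[OF assms(2), of "-1"]] by simp

lemma L2_sum:
  fixes f :: "'i \<Rightarrow> 'a \<Rightarrow> 'v::{real_normed_vector, second_countable_topology}"
  assumes "finite I" "\<And>i. i \<in> I \<Longrightarrow> L2 M (f i)"
  shows "L2 M (\<lambda>\<omega>. \<Sum>i\<in>I. f i \<omega>)"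
  using assms
proof (induction I rule: finite_induct)
  case empty then show ?case using L2_const[of 0] by simp
next
  case (insert i I)
  then show ?case using L2_add[of "f i" "\<lambda>\<omega>. \<Sum>i\<in>I. f i \<omega>"] by simp
qed

lemma L2_integrable_norm:
  fixes f :: "'a \<Rightarrow> 'v::{real_normed_vector, second_countable_topology}"
  assumes "L2 M f" shows "integrable M (\<lambda>\<omega>. norm (f \<omega>))"
proof (rule square_integrable_imp_integrable)
  show "(\<lambda>\<omega>. norm (f \<omega>)) \<in> borel_measurable M"
    using L2_borel_measurable[OF assms] by measurable
qed (rule L2_integrable_sq[OF assms])

lemma L2_integrable_inner:
  fixes f g :: "'a \<Rightarrow> 'v::{real_inner, second_countable_topology}"
  assumes "L2 M f" and "L2 M g" shows "integrable M (\<lambda>\<omega>. f \<omega> \<bullet> g \<omega>)"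
proof (rule Bochner_Integration.integrable_bound)
  show "integrable M (\<lambda>\<omega>. (norm (f \<omega>))^2 + (norm (g \<omega>))^2)"
    using L2_integrable_sq[OF assms(1)] L2_integrable_sq[OF assms(2)]
    by (rule Bochner_Integration.integrable_add)
  show "(\<lambda>\<omega>. f \<omega> \<bullet> g \<omega>) \<in> borel_measurable M"
    using L2_borel_measurable[OF assms(1)] L2_borel_measurable[OF assms(2)] by measurable
  show "AE \<omega> in M. norm (f \<omega> \<bullet> g \<omega>) \<le> norm ((norm (f \<omega>))^2 + (norm (g \<omega>))^2)"
  proof (intro AE_I2)
    fix \<omega>
    have "\<bar>f \<omega> \<bullet> g \<omega>\<bar> \<le> norm (f \<omega>) * norm (g \<omega>)" by (rule Cauchy_Schwarz_ineq2)
    also have "\<dots> \<le> (norm (f \<omega>))^2 + (norm (g \<omega>))^2"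
      using sum_squares_bound[of "norm (f \<omega>)" "norm (g \<omega>)"]
        mult_nonneg_nonneg[OF norm_ge_zero norm_ge_zero, of "f \<omega>" "g \<omega>"] by linarith
    finally show "norm (f \<omega> \<bullet> g \<omega>) \<le> norm ((norm (f \<omega>))^2 + (norm (g \<omega>))^2)" by simp
  qed
qed

end

section \<open>Samples independent of a random variable\<close>

definition indep_sample :: "'w measure \<Rightarrow> ('w \<Rightarrow> 'c::topological_space) \<Rightarrow> ('w \<Rightarrow> 'd) \<Rightarrow> 'd measure \<Rightarrow> bool" where
  "indep_sample M W Z D \<longleftrightarrow> W \<in> borel_measurable M \<and> Z \<in> measurable M D \<and> distr M D Z = D \<and>
     (\<forall>A\<in>sets borel. \<forall>B\<in>sets D. measure M ((W -` A \<inter> space M) \<inter> (Z -` B \<inter> space M))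
        = measure M (W -` A \<inter> space M) * measure M (Z -` B \<inter> space M))"

context prob_space
begin

lemma distr_Pair_indep_sample:
  assumes ind: "indep_sample M W Z D"
  shows "distr M (borel \<Otimes>\<^sub>M D) (\<lambda>\<omega>. (W \<omega>, Z \<omega>)) = distr M borel W \<Otimes>\<^sub>M D"
proof -
  have W: "W \<in> borel_measurable M" and Z: "Z \<in> measurable M D" and law: "distr M D Z = D"
    using ind by (auto simp: indep_sample_def)
  interpret W: prob_space "distr M borel W" by (rule prob_space_distr[OF W])
  interpret D: prob_space D using prob_space_distr[OF Z] by (simp add: law)
  interpret WD: pair_prob_space "distr M borel W" D ..
  show ?thesis
  proof (rule pair_measure_eqI[symmetric])
    fix A B assume A: "A \<in> sets (distr M borel W)" and B: "B \<in> sets D"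
    have "emeasure (distr M (borel \<Otimes>\<^sub>M D) (\<lambda>\<omega>. (W \<omega>, Z \<omega>))) (A \<times> B)
        = emeasure M ((W -` A \<inter> space M) \<inter> (Z -` B \<inter> space M))"
      using A B W Z by (subst emeasure_distr) (auto intro: measurable_Pair arg_cong[where f="emeasure M"])
    also have "\<dots> = emeasure M (W -` A \<inter> space M) * emeasure M (Z -` B \<inter> space M)"
      using ind A B by (simp add: indep_sample_def emeasure_eq_measure measure_nonneg ennreal_mult)
    also have "\<dots> = emeasure (distr M borel W) A * emeasure D B"
      using W Z A B law by (metis emeasure_distr sets_distr)
    finally show "emeasure (distr M borel W) A * emeasure D B
        = emeasure (distr M (borel \<Otimes>\<^sub>M D) (\<lambda>\<omega>. (W \<omega>, Z \<omega>))) (A \<times> B)" by simp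
  qed (simp_all add: W.sigma_finite_measure_axioms D.sigma_finite_measure_axioms)
qed

lemma nn_integral_indep_sample:
  assumes ind: "indep_sample M W Z D" and g: "g \<in> borel_measurable (borel \<Otimes>\<^sub>M D)"
  shows "(\<integral>\<^sup>+\<omega>. g (W \<omega>, Z \<omega>) \<partial>M) = (\<integral>\<^sup>+\<omega>. (\<integral>\<^sup>+s. g (W \<omega>, s) \<partial>D) \<partial>M)"
proof -
  have W: "W \<in> borel_measurable M" and Z: "Z \<in> measurable M D" and law: "distr M D Z = D"
    using ind by (auto simp: indep_sample_def)
  interpret D: prob_space D using prob_space_distr[OF Z] by (simp add: law)
  have "(\<integral>\<^sup>+\<omega>. g (W \<omega>, Z \<omega>) \<partial>M) = (\<integral>\<^sup>+p. g p \<partial>distr M (borel \<Otimes>\<^sub>M D) (\<lambda>\<omega>. (W \<omega>, Z \<omega>)))"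
    using W Z g by (subst nn_integral_distr) (auto intro: measurable_Pair)
  also have "\<dots> = (\<integral>\<^sup>+p. g p \<partial>(distr M borel W \<Otimes>\<^sub>M D))"
    by (simp add: distr_Pair_indep_sample[OF ind])
  also have "\<dots> = (\<integral>\<^sup>+w. (\<integral>\<^sup>+s. g (w, s) \<partial>D) \<partial>distr M borel W)"
    using g by (intro D.nn_integral_fst[symmetric]) (simp cong: measurable_cong_sets)
  also have "\<dots> = (\<integral>\<^sup>+\<omega>. (\<integral>\<^sup>+s. g (W \<omega>, s) \<partial>D) \<partial>M)"
    using W D.borel_measurable_nn_integral_fst[OF g] by (subst nn_integral_distr) auto
  finally show ?thesis .
qed

lemma integral_indep_sample:
  fixes g :: "'c::topological_space \<times> 'd \<Rightarrow> real"
  assumes ind: "indep_sample M W Z D" and g: "g \<in> borel_measurable (borel \<Otimes>\<^sub>M D)"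
    and fin: "(\<integral>\<^sup>+\<omega>. (\<integral>\<^sup>+s. ennreal (norm (g (W \<omega>, s))) \<partial>D) \<partial>M) < \<infinity>"
  shows "integrable M (\<lambda>\<omega>. g (W \<omega>, Z \<omega>))"
    and "(\<integral>\<omega>. g (W \<omega>, Z \<omega>) \<partial>M) = (\<integral>\<omega>. (\<integral>s. g (W \<omega>, s) \<partial>D) \<partial>M)"
proof -
  have W: "W \<in> borel_measurable M" and Z: "Z \<in> measurable M D" and law: "distr M D Z = D"
    using ind by (auto simp: indep_sample_def)
  interpret W: prob_space "distr M borel W" by (rule prob_space_distr[OF W])
  interpret D: prob_space D using prob_space_distr[OF Z] by (simp add: law)
  interpret WD: pair_prob_space "distr M borel W" D ..
  have WZ: "(\<lambda>\<omega>. (W \<omega>, Z \<omega>)) \<in> measurable M (borel \<Otimes>\<^sub>M D)"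
    using W Z by (rule measurable_Pair)
  have "(\<integral>\<^sup>+\<omega>. ennreal (norm (g (W \<omega>, Z \<omega>))) \<partial>M) < \<infinity>"
    using fin g by (subst nn_integral_indep_sample[OF ind]) auto
  then show "integrable M (\<lambda>\<omega>. g (W \<omega>, Z \<omega>))"
    using measurable_compose[OF WZ g] by (simp add: integrable_iff_bounded)
  then have "integrable (distr M borel W \<Otimes>\<^sub>M D) g"
    using integrable_distr_eq[OF WZ g] by (simp add: distr_Pair_indep_sample[OF ind])
  have "(\<integral>\<omega>. g (W \<omega>, Z \<omega>) \<partial>M) = (\<integral>p. g p \<partial>distr M (borel \<Otimes>\<^sub>M D) (\<lambda>\<omega>. (W \<omega>, Z \<omega>)))"
    by (rule integral_distr[OF WZ g, symmetric])
  also have "\<dots> = (\<integral>w. (\<integral>s. g (w, s) \<partial>D) \<partial>distr M borel W)"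
    unfolding distr_Pair_indep_sample[OF ind] by (rule WD.integral_fst'[symmetric]) fact
  also have "\<dots> = (\<integral>\<omega>. (\<integral>s. g (W \<omega>, s) \<partial>D) \<partial>M)"
    using D.borel_measurable_lebesgue_integral[of "\<lambda>w s. g (w, s)" borel] g
    by (intro integral_distr W) simp
  finally show "(\<integral>\<omega>. g (W \<omega>, Z \<omega>) \<partial>M) = (\<integral>\<omega>. (\<integral>s. g (W \<omega>, s) \<partial>D) \<partial>M)" .
qed

end

section \<open>Unbiasedness of the stochastic partial gradient\<close>

locale stochastic_gradient_model =
  fixes F :: "'a::euclidean_space \<Rightarrow> 'b::euclidean_space \<Rightarrow> 'xi \<Rightarrow> real"
    and Gx :: "'a \<Rightarrow> 'b \<Rightarrow> 'xi \<Rightarrow> 'a" and Gy :: "'a \<Rightarrow> 'b \<Rightarrow> 'xi \<Rightarrow> 'b"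
    and gfx :: "'a \<Rightarrow> 'b \<Rightarrow> 'a" and gfy :: "'a \<Rightarrow> 'b \<Rightarrow> 'b"
    and D :: "'xi measure" and L \<sigma> :: real
  assumes D_prob: "prob_space D"
    and F_int: "\<And>x y. integrable D (F x y)"
    and F_grad: "\<And>x y s. ((\<lambda>(x', y'). F x' y' s) has_derivative
                   (\<lambda>(h1, h2). Gx x y s \<bullet> h1 + Gy x y s \<bullet> h2)) (at (x, y))"
    and Gy_meas: "(\<lambda>(z, s). Gy (fst z) (snd z) s) \<in> borel_measurable (borel \<Otimes>\<^sub>M D)"
    and f_grad: "\<And>x y. ((\<lambda>(x', y'). pop_obj D F x' y') has_derivative
                   (\<lambda>(h1, h2). gfx x y \<bullet> h1 + gfy x y \<bullet> h2)) (at (x, y))"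
    and A2: "\<And>x y x' y'. (\<integral>\<^sup>+ s. ennreal (norm (Gx x y s - Gx x' y' s)^2 + norm (Gy x y s - Gy x' y' s)^2) \<partial>D)
                 \<le> ennreal (L^2 * (norm (x - x')^2 + norm (y - y')^2))"
    and A3: "\<And>x s. concave_on UNIV (\<lambda>y. F x y s)"
    and var: "\<And>x y. (\<integral>\<^sup>+ s. ennreal (norm (Gx x y s - gfx x y)^2 + norm (Gy x y s - gfy x y)^2) \<partial>D)
                 \<le> ennreal (\<sigma>^2)"
begin

lemma Gy_measurable_comp:
  assumes "X \<in> borel_measurable N" "Y \<in> borel_measurable N" "Z \<in> measurable N D"
  shows "(\<lambda>\<omega>. Gy (X \<omega>) (Y \<omega>) (Z \<omega>)) \<in> borel_measurable N"
proof -
  have "(\<lambda>\<omega>. ((X \<omega>, Y \<omega>), Z \<omega>)) \<in> measurable N (borel \<Otimes>\<^sub>M D)"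
    using assms by (intro measurable_Pair borel_measurable_Pair) auto
  from measurable_compose[OF this Gy_meas] show ?thesis by simp
qed

lemma Gy_borel_measurable [measurable]: "(\<lambda>s. Gy x y s) \<in> borel_measurable D"
  using Gy_measurable_comp[of "\<lambda>_. x" D "\<lambda>_. y" "\<lambda>s. s"] by simp

lemma nn_integral_Gy_noise_sq_le:
  "(\<integral>\<^sup>+ s. ennreal (norm (Gy x y s - gfy x y)^2) \<partial>D) \<le> ennreal (\<bar>\<sigma>\<bar>^2)"
proof -
  have "(\<integral>\<^sup>+ s. ennreal (norm (Gy x y s - gfy x y)^2) \<partial>D)
     \<le> (\<integral>\<^sup>+ s. ennreal (norm (Gx x y s - gfx x y)^2 + norm (Gy x y s - gfy x y)^2) \<partial>D)"
    by (intro nn_integral_mono ennreal_leI) simp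
  also have "\<dots> \<le> ennreal (\<sigma>^2)" by (rule var)
  finally show ?thesis by simp
qed

lemma nn_integral_Gy_diff_sq_le:
  "(\<integral>\<^sup>+ s. ennreal (norm (Gy x y s - Gy x' y' s)^2) \<partial>D)
    \<le> ennreal (L^2 * (norm (x - x')^2 + norm (y - y')^2))"
proof -
  have "(\<integral>\<^sup>+ s. ennreal (norm (Gy x y s - Gy x' y' s)^2) \<partial>D)
     \<le> (\<integral>\<^sup>+ s. ennreal (norm (Gx x y s - Gx x' y' s)^2 + norm (Gy x y s - Gy x' y' s)^2) \<partial>D)"
    by (intro nn_integral_mono ennreal_leI) simp
  also have "\<dots> \<le> ennreal (L^2 * (norm (x - x')^2 + norm (y - y')^2))" by (rule A2)
  finally show ?thesis .
qed

lemma nn_integral_Gy_noise_le: "(\<integral>\<^sup>+ s. ennreal (norm (Gy x y s - gfy x y)) \<partial>D) \<le> ennreal \<bar>\<sigma>\<bar>"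
  by (rule prob_space.nn_integral_norm_le_of_nn_integral_sq_le[OF D_prob _ nn_integral_Gy_noise_sq_le])
    auto

lemma nn_integral_Gy_diff_le:
  "(\<integral>\<^sup>+ s. ennreal (norm (Gy x y s - Gy x' y' s)) \<partial>D)
    \<le> ennreal (\<bar>L\<bar> * sqrt (norm (x - x')^2 + norm (y - y')^2))"
proof (rule prob_space.nn_integral_norm_le_of_nn_integral_sq_le[OF D_prob])
  have "(\<bar>L\<bar> * sqrt (norm (x - x')^2 + norm (y - y')^2))^2 = L^2 * (norm (x - x')^2 + norm (y - y')^2)"
    by (simp add: power_mult_distrib)
  then show "(\<integral>\<^sup>+ s. ennreal (norm (Gy x y s - Gy x' y' s)^2) \<partial>D)
    \<le> ennreal ((\<bar>L\<bar> * sqrt (norm (x - x')^2 + norm (y - y')^2))^2)"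
    using nn_integral_Gy_diff_sq_le by simp
qed auto

lemma integrable_Gy: "integrable D (Gy x y)"
proof -
  interpret prob_space D by (rule D_prob)
  have "integrable D (\<lambda>s. Gy x y s - gfy x y)"
    unfolding integrable_iff_bounded using nn_integral_Gy_noise_le[of x y]
    by (auto simp: le_less_trans[OF _ ennreal_less_top])
  moreover have "integrable D (\<lambda>s. gfy x y)" by simp
  ultimately have "integrable D (\<lambda>s. (Gy x y s - gfy x y) + gfy x y)"
    by (rule Bochner_Integration.integrable_add)
  then show ?thesis by simp
qed

lemma F_linearization_error_le:
  assumes \<tau>: "0 < \<tau>"
  shows "\<bar>F x (y + \<tau> *\<^sub>R d) s - F x y s - \<tau> * (Gy x y s \<bullet> d)\<bar>
    \<le> \<tau> * norm d * norm (Gy x (y + \<tau> *\<^sub>R d) s - Gy x y s)"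
proof -
  define y' where "y' = y + \<tau> *\<^sub>R d"
  have Fd: "((\<lambda>y. F x y s) has_derivative (\<lambda>h. Gy x z s \<bullet> h)) (at z)" for z
    using has_derivative_partial_snd[OF F_grad] .
  have upper: "F x y' s \<le> F x y s + \<tau> * (Gy x y s \<bullet> d)"
    using concave_on_le_tangent[OF A3 Fd[of y], of y'] by (simp add: y'_def inner_scaleR_right)
  have "F x y s \<le> F x y' s - \<tau> * (Gy x y' s \<bullet> d)"
    using concave_on_le_tangent[OF A3 Fd[of y'], of y] by (simp add: y'_def inner_diff_right)
  then have lower: "\<tau> * ((Gy x y' s - Gy x y s) \<bullet> d) \<le> F x y' s - F x y s - \<tau> * (Gy x y s \<bullet> d)"
    by (simp add: inner_diff_left algebra_simps)
  have "\<bar>(Gy x y' s - Gy x y s) \<bullet> d\<bar> \<le> norm d * norm (Gy x y' s - Gy x y s)"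
    using Cauchy_Schwarz_ineq2[of "Gy x y' s - Gy x y s" d] by (simp add: mult.commute)
  then have "- (\<tau> * norm d * norm (Gy x y' s - Gy x y s)) \<le> \<tau> * ((Gy x y' s - Gy x y s) \<bullet> d)"
    using \<tau> mult_left_mono[of "- ((Gy x y' s - Gy x y s) \<bullet> d)" "norm d * norm (Gy x y' s - Gy x y s)" \<tau>]
    by (simp add: mult.assoc abs_le_iff)
  with upper lower show ?thesis by (simp add: y'_def abs_le_iff)
qed

lemma pop_obj_linearization_error_le:
  assumes \<tau>: "0 < \<tau>"
  shows "\<bar>pop_obj D F x (y + \<tau> *\<^sub>R d) - pop_obj D F x y - \<tau> * ((\<integral>s. Gy x y s \<partial>D) \<bullet> d)\<bar>
    \<le> \<bar>L\<bar> * \<tau>^2 * (norm d)^2"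
proof -
  define R where "R = (\<lambda>s. F x (y + \<tau> *\<^sub>R d) s - F x y s - \<tau> * (Gy x y s \<bullet> d))"
  have "pop_obj D F x (y + \<tau> *\<^sub>R d) - pop_obj D F x y - \<tau> * ((\<integral>s. Gy x y s \<partial>D) \<bullet> d) = (\<integral>s. R s \<partial>D)"
    unfolding R_def pop_obj_def using F_int integrable_Gy by simp
  moreover have "integrable D R"
    unfolding R_def using F_int integrable_Gy by auto
  ultimately have "ennreal \<bar>pop_obj D F x (y + \<tau> *\<^sub>R d) - pop_obj D F x y - \<tau> * ((\<integral>s. Gy x y s \<partial>D) \<bullet> d)\<bar>
      \<le> (\<integral>\<^sup>+s. norm (R s) \<partial>D)"
    using integral_norm_bound_ennreal[of D R] by simp
  also have "\<dots> \<le> (\<integral>\<^sup>+s. ennreal (\<tau> * norm d) * ennreal (norm (Gy x (y + \<tau> *\<^sub>R d) s - Gy x y s)) \<partial>D)"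
    unfolding R_def using \<tau> F_linearization_error_le[OF \<tau>]
    by (intro nn_integral_mono) (simp add: ennreal_mult'[symmetric])
  also have "\<dots> = ennreal (\<tau> * norm d) * (\<integral>\<^sup>+s. ennreal (norm (Gy x (y + \<tau> *\<^sub>R d) s - Gy x y s)) \<partial>D)"
    by (rule nn_integral_cmult) measurable
  also have "\<dots> \<le> ennreal (\<tau> * norm d) * ennreal (\<bar>L\<bar> * sqrt (norm (x - x)^2 + norm (y + \<tau> *\<^sub>R d - y)^2))"
    by (intro mult_left_mono nn_integral_Gy_diff_le) simp
  also have "\<dots> = ennreal (\<bar>L\<bar> * \<tau>^2 * (norm d)^2)"
    using \<tau> by (simp add: ennreal_mult'[symmetric] power2_eq_square)
  finally show ?thesis by (subst (asm) ennreal_le_iff) auto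
qed

lemma integral_Gy_eq_gfy: "(\<integral>s. Gy x y s \<partial>D) = gfy x y"
proof -
  define h where "h = (\<integral>s. Gy x y s \<partial>D)"
  define f where "f = (\<lambda>y'. pop_obj D F x y')"
  have "gfy x y \<bullet> d = h \<bullet> d" for d
  proof -
    define Q where "Q = (\<lambda>\<tau>. (f (y + \<tau> *\<^sub>R d) - f y) / \<tau>)"
    have "(f has_derivative (\<lambda>h. gfy x y \<bullet> h)) (at y)"
      unfolding f_def using has_derivative_partial_snd[OF f_grad] .
    from directional_derivative_tendsto[OF this]
    have "(Q \<longlongrightarrow> gfy x y \<bullet> d) (at_right 0)"
      unfolding Q_def by (rule filterlim_mono) (simp_all add: at_within_le_at)
    then have lim: "((\<lambda>\<tau>. \<bar>Q \<tau> - h \<bullet> d\<bar>) \<longlongrightarrow> \<bar>gfy x y \<bullet> d - h \<bullet> d\<bar>) (at_right 0)"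
      by (intro tendsto_intros)
    have "((\<lambda>\<tau>. \<bar>L\<bar> * \<tau> * (norm d)^2) \<longlongrightarrow> \<bar>L\<bar> * 0 * (norm d)^2) (at_right (0::real))"
      by (intro tendsto_intros)
    then have lim0: "((\<lambda>\<tau>. \<bar>L\<bar> * \<tau> * (norm d)^2) \<longlongrightarrow> 0) (at_right (0::real))" by simp
    have "\<bar>Q \<tau> - h \<bullet> d\<bar> \<le> \<bar>L\<bar> * \<tau> * (norm d)^2" if \<tau>: "0 < \<tau>" for \<tau>
    proof -
      have "Q \<tau> - h \<bullet> d = (f (y + \<tau> *\<^sub>R d) - f y - \<tau> * (h \<bullet> d)) / \<tau>"
        unfolding Q_def using \<tau> by (simp add: field_simps)
      then show ?thesis
        using pop_obj_linearization_error_le[OF \<tau>, of x y d] \<tau>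
        by (simp add: f_def h_def divide_le_eq abs_divide power2_eq_square mult_ac)
    qed
    then have "eventually (\<lambda>\<tau>. \<bar>Q \<tau> - h \<bullet> d\<bar> \<le> \<bar>L\<bar> * \<tau> * (norm d)^2) (at_right 0)"
      using eventually_at_right_real[of "0::real" 1, OF zero_less_one] by (auto elim: eventually_mono)
    from tendsto_le[OF _ lim0 lim this] show ?thesis by simp
  qed
  from this[of "gfy x y - h"] have "(gfy x y - h) \<bullet> (gfy x y - h) = 0"
    by (simp add: inner_diff_left)
  then show ?thesis unfolding h_def by simp
qed

lemma nn_integral_inner_Gy_noise_le:
  "(\<integral>\<^sup>+s. ennreal \<bar>b \<bullet> (Gy x y s - gfy x y)\<bar> \<partial>D) \<le> ennreal (\<bar>\<sigma>\<bar> * norm b)"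
proof -
  have "(\<integral>\<^sup>+s. ennreal \<bar>b \<bullet> (Gy x y s - gfy x y)\<bar> \<partial>D)
      \<le> (\<integral>\<^sup>+s. ennreal (norm b) * ennreal (norm (Gy x y s - gfy x y)) \<partial>D)"
    using Cauchy_Schwarz_ineq2
    by (intro nn_integral_mono) (simp add: ennreal_mult'[symmetric] ennreal_leI)
  also have "\<dots> = ennreal (norm b) * (\<integral>\<^sup>+s. ennreal (norm (Gy x y s - gfy x y)) \<partial>D)"
    by (rule nn_integral_cmult) measurable
  also have "\<dots> \<le> ennreal (norm b) * ennreal \<bar>\<sigma>\<bar>"
    by (intro mult_left_mono nn_integral_Gy_noise_le) simp
  finally show ?thesis by (simp add: ennreal_mult'[symmetric] mult.commute)
qed

lemma integral_inner_Gy_noise_eq_0: "(\<integral>s. b \<bullet> (Gy x y s - gfy x y) \<partial>D) = 0"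
proof -
  interpret D: prob_space D by (rule D_prob)
  have "(\<integral>s. b \<bullet> (Gy x y s - gfy x y) \<partial>D) = b \<bullet> (\<integral>s. Gy x y s - gfy x y \<partial>D)"
    using integrable_Gy by (simp add: integral_inner_right)
  also have "(\<integral>s. Gy x y s - gfy x y \<partial>D) = 0"
    using integrable_Gy integral_Gy_eq_gfy by (simp add: D.prob_space)
  finally show ?thesis by simp
qed

lemma gfy_lipschitz: "norm (gfy x y - gfy x' y') \<le> \<bar>L\<bar> * norm ((x, y) - (x', y'))"
proof -
  interpret D: prob_space D by (rule D_prob)
  have "gfy x y - gfy x' y' = (\<integral>s. Gy x y s - Gy x' y' s \<partial>D)"
    using integrable_Gy integral_Gy_eq_gfy by simp
  then have "ennreal (norm (gfy x y - gfy x' y')) \<le> (\<integral>\<^sup>+s. norm (Gy x y s - Gy x' y' s) \<partial>D)"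
    using integral_norm_bound_ennreal[of D "\<lambda>s. Gy x y s - Gy x' y' s"] integrable_Gy by simp
  also have "\<dots> \<le> ennreal (\<bar>L\<bar> * sqrt (norm (x - x')^2 + norm (y - y')^2))"
    by (rule nn_integral_Gy_diff_le)
  finally show ?thesis by (auto simp add: norm_Pair ennreal_le_iff2)
qed

lemma gfy_measurable_comp:
  assumes "X \<in> borel_measurable N" "Y \<in> borel_measurable N"
  shows "(\<lambda>\<omega>. gfy (X \<omega>) (Y \<omega>)) \<in> borel_measurable N"
proof -
  interpret D: prob_space D by (rule D_prob)
  have "(\<lambda>z. \<integral>s. Gy (fst z) (snd z) s \<partial>D) \<in> borel_measurable borel"
    using D.borel_measurable_lebesgue_integral[of "\<lambda>z s. Gy (fst z) (snd z) s" borel] Gy_meas by simp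
  then have "(\<lambda>z. gfy (fst z) (snd z)) \<in> borel_measurable borel"
    using integral_Gy_eq_gfy by simp
  from measurable_compose[OF borel_measurable_Pair[OF assms] this] show ?thesis by simp
qed

lemma L2_gfy:
  assumes "finite_measure M" and X: "L2 M X" and Y: "L2 M Y"
  shows "L2 M (\<lambda>\<omega>. gfy (X \<omega>) (Y \<omega>))"
proof -
  interpret finite_measure M by fact
  show ?thesis
  proof (rule L2_affine_bound[OF L2_Pair[OF X Y], where a="norm (gfy 0 0)" and c="\<bar>L\<bar>"])
    show "(\<lambda>\<omega>. gfy (X \<omega>) (Y \<omega>)) \<in> borel_measurable M"
      using X Y by (intro gfy_measurable_comp L2_borel_measurable)
    fix \<omega>
    have "norm (gfy (X \<omega>) (Y \<omega>)) \<le> norm (gfy 0 0) + norm (gfy (X \<omega>) (Y \<omega>) - gfy 0 0)"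
      by (rule norm_triangle_sub)
    also have "\<dots> \<le> norm (gfy 0 0) + \<bar>L\<bar> * norm ((X \<omega>, Y \<omega>) - (0, 0))"
      using gfy_lipschitz by (rule add_left_mono)
    finally show "norm (gfy (X \<omega>) (Y \<omega>)) \<le> norm (gfy 0 0) + \<bar>L\<bar> * norm (X \<omega>, Y \<omega>)"
      by (simp add: zero_prod_def[symmetric])
  qed
qed

end

locale sampled_stochastic_gradient = stochastic_gradient_model F Gx Gy gfx gfy D L \<sigma> + prob_space M
  for F :: "'a::euclidean_space \<Rightarrow> 'b::euclidean_space \<Rightarrow> 'xi \<Rightarrow> real"
    and Gx :: "'a \<Rightarrow> 'b \<Rightarrow> 'xi \<Rightarrow> 'a" and Gy :: "'a \<Rightarrow> 'b \<Rightarrow> 'xi \<Rightarrow> 'b"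
    and gfx :: "'a \<Rightarrow> 'b \<Rightarrow> 'a" and gfy :: "'a \<Rightarrow> 'b \<Rightarrow> 'b"
    and D :: "'xi measure" and L \<sigma> :: real and M :: "'w measure"
begin

lemma L2_Gy_diff_indep_sample:
  assumes ind: "indep_sample M (\<lambda>\<omega>. (X1 \<omega>, Y1 \<omega>, X2 \<omega>, Y2 \<omega>)) Z D"
    and L2: "L2 M X1" "L2 M Y1" "L2 M X2" "L2 M Y2"
  shows "L2 M (\<lambda>\<omega>. Gy (X1 \<omega>) (Y1 \<omega>) (Z \<omega>) - Gy (X2 \<omega>) (Y2 \<omega>) (Z \<omega>))"
proof (rule L2I_nn_integral)
  have Z: "Z \<in> measurable M D"
    using ind by (simp add: indep_sample_def)
  show "(\<lambda>\<omega>. Gy (X1 \<omega>) (Y1 \<omega>) (Z \<omega>) - Gy (X2 \<omega>) (Y2 \<omega>) (Z \<omega>)) \<in> borel_measurable M"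
    using L2 Z by (intro borel_measurable_diff Gy_measurable_comp L2_borel_measurable)
  define h where "h = (\<lambda>p::('a \<times> 'b \<times> 'a \<times> 'b) \<times> 'xi. Gy (fst (fst p)) (fst (snd (fst p))) (snd p)
        - Gy (fst (snd (snd (fst p)))) (snd (snd (snd (fst p)))) (snd p))"
  define g where "g = (\<lambda>p. ennreal ((norm (h p))^2))"
  have W: "fst \<in> borel_measurable (borel \<Otimes>\<^sub>M D)" by (rule measurable_fst)
  have "h \<in> borel_measurable (borel \<Otimes>\<^sub>M D)"
    unfolding h_def
    by (intro borel_measurable_diff Gy_measurable_comp borel_measurable_fst' borel_measurable_snd' W measurable_snd)
  then have "g \<in> borel_measurable (borel \<Otimes>\<^sub>M D)"
    unfolding g_def by measurable
  then have "(\<integral>\<^sup>+\<omega>. g ((X1 \<omega>, Y1 \<omega>, X2 \<omega>, Y2 \<omega>), Z \<omega>) \<partial>M)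
      = (\<integral>\<^sup>+\<omega>. (\<integral>\<^sup>+s. g ((X1 \<omega>, Y1 \<omega>, X2 \<omega>, Y2 \<omega>), s) \<partial>D) \<partial>M)"
    by (rule nn_integral_indep_sample[OF ind])
  also have "\<dots> \<le> (\<integral>\<^sup>+\<omega>. ennreal (L^2 * ((norm (X1 \<omega> - X2 \<omega>))^2 + (norm (Y1 \<omega> - Y2 \<omega>))^2)) \<partial>M)"
    unfolding g_def h_def by (intro nn_integral_mono) (simp add: nn_integral_Gy_diff_sq_le)
  also have "\<dots> < \<infinity>"
  proof -
    have "L2 M (\<lambda>\<omega>. X1 \<omega> - X2 \<omega>)" "L2 M (\<lambda>\<omega>. Y1 \<omega> - Y2 \<omega>)"
      using L2 by (auto intro: L2_diff)
    then have "integrable M (\<lambda>\<omega>. L^2 * ((norm (X1 \<omega> - X2 \<omega>))^2 + (norm (Y1 \<omega> - Y2 \<omega>))^2))"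
      by (auto intro!: integrable_mult_right simp: L2_def)
    then show ?thesis by (simp add: nn_integral_eq_integral)
  qed
  finally show "(\<integral>\<^sup>+\<omega>. ennreal ((norm (Gy (X1 \<omega>) (Y1 \<omega>) (Z \<omega>) - Gy (X2 \<omega>) (Y2 \<omega>) (Z \<omega>)))^2) \<partial>M) < \<infinity>"
    by (simp add: g_def h_def)
qed

lemma inner_Gy_noise_indep_sample:
  assumes ind: "indep_sample M (\<lambda>\<omega>. (B \<omega>, X \<omega>, Y \<omega>)) Z D" and B: "L2 M B"
  shows "integrable M (\<lambda>\<omega>. B \<omega> \<bullet> (Gy (X \<omega>) (Y \<omega>) (Z \<omega>) - gfy (X \<omega>) (Y \<omega>)))"
    and "(\<integral>\<omega>. B \<omega> \<bullet> (Gy (X \<omega>) (Y \<omega>) (Z \<omega>) - gfy (X \<omega>) (Y \<omega>)) \<partial>M) = 0"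
proof -
  define g where "g = (\<lambda>p::('b \<times> 'a \<times> 'b) \<times> 'xi. fst (fst p) \<bullet> (Gy (fst (snd (fst p))) (snd (snd (fst p))) (snd p)
        - gfy (fst (snd (fst p))) (snd (snd (fst p)))))"
  have W: "fst \<in> borel_measurable (borel \<Otimes>\<^sub>M D)" by (rule measurable_fst)
  have g_meas: "g \<in> borel_measurable (borel \<Otimes>\<^sub>M D)"
    unfolding g_def
    by (intro borel_measurable_inner borel_measurable_diff Gy_measurable_comp gfy_measurable_comp
        borel_measurable_fst' borel_measurable_snd' W measurable_snd)
  have "(\<integral>\<^sup>+\<omega>. (\<integral>\<^sup>+s. ennreal (norm (g ((B \<omega>, X \<omega>, Y \<omega>), s))) \<partial>D) \<partial>M)
      \<le> (\<integral>\<^sup>+\<omega>. ennreal (\<bar>\<sigma>\<bar> * norm (B \<omega>)) \<partial>M)"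
    unfolding g_def by (intro nn_integral_mono) (simp add: nn_integral_inner_Gy_noise_le)
  also have "\<dots> < \<infinity>"
    using integrable_mult_right[OF L2_integrable_norm[OF B], of "\<bar>\<sigma>\<bar>"]
    by (simp add: nn_integral_eq_integral)
  finally have fin: "(\<integral>\<^sup>+\<omega>. (\<integral>\<^sup>+s. ennreal (norm (g ((B \<omega>, X \<omega>, Y \<omega>), s))) \<partial>D) \<partial>M) < \<infinity>" .
  show "integrable M (\<lambda>\<omega>. B \<omega> \<bullet> (Gy (X \<omega>) (Y \<omega>) (Z \<omega>) - gfy (X \<omega>) (Y \<omega>)))"
    using integral_indep_sample(1)[OF ind g_meas fin] by (simp add: g_def)
  have "(\<integral>\<omega>. g ((B \<omega>, X \<omega>, Y \<omega>), Z \<omega>) \<partial>M) = 0"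
    using integral_indep_sample(2)[OF ind g_meas fin] by (simp add: g_def integral_inner_Gy_noise_eq_0)
  then show "(\<integral>\<omega>. B \<omega> \<bullet> (Gy (X \<omega>) (Y \<omega>) (Z \<omega>) - gfy (X \<omega>) (Y \<omega>)) \<partial>M) = 0"
    by (simp add: g_def)
qed

end

section \<open>The inner loop of SREDA\<close>

lemma fst_sreda_inner_state_Suc:
  "fst (sreda_inner_state Gx Gy lam S2 xs xk yk vk uk x1 (Suc n)) = x1"
  by (induction n) (simp_all add: Let_def split_beta)

lemma sreda_y_0: "sreda_y Gx Gy lam S2 xs xk yk vk uk x1 0 = yk"
  by (simp add: sreda_y_def Let_def split_beta)

lemma sreda_u_0: "sreda_u Gx Gy lam S2 xs xk yk vk uk x1 0 =
   uk + (1 / real S2) *\<^sub>R (\<Sum>i<S2. Gy x1 yk (xs 0 i) - Gy xk yk (xs 0 i))"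
  by (simp add: sreda_u_def Let_def split_beta)

lemma sreda_y_Suc: "sreda_y Gx Gy lam S2 xs xk yk vk uk x1 (Suc j) =
   sreda_y Gx Gy lam S2 xs xk yk vk uk x1 j + lam *\<^sub>R sreda_u Gx Gy lam S2 xs xk yk vk uk x1 j"
  by (simp add: sreda_y_def sreda_u_def Let_def split_beta del: sreda_inner_state.simps(2))
    (simp add: Let_def split_beta)

lemma sreda_u_Suc: "sreda_u Gx Gy lam S2 xs xk yk vk uk x1 (Suc j) =
   sreda_u Gx Gy lam S2 xs xk yk vk uk x1 j + (1 / real S2) *\<^sub>R
     (\<Sum>i<S2. Gy x1 (sreda_y Gx Gy lam S2 xs xk yk vk uk x1 (Suc j)) (xs (Suc j) i)
             - Gy x1 (sreda_y Gx Gy lam S2 xs xk yk vk uk x1 j) (xs (Suc j) i))"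
proof -
  have "fst (sreda_inner_state Gx Gy lam S2 xs xk yk vk uk x1 (Suc j)) = x1"
    by (rule fst_sreda_inner_state_Suc)
  then show ?thesis
    unfolding sreda_u_def sreda_y_Suc
    by (subst sreda_inner_state.simps(2)) (simp add: Let_def split_beta sreda_y_def sreda_u_def)
qed

locale sreda_inner_loop = sampled_stochastic_gradient F Gx Gy gfx gfy D L \<sigma> M
  for F :: "'a::euclidean_space \<Rightarrow> 'b::euclidean_space \<Rightarrow> 'xi \<Rightarrow> real"
    and Gx :: "'a \<Rightarrow> 'b \<Rightarrow> 'xi \<Rightarrow> 'a" and Gy :: "'a \<Rightarrow> 'b \<Rightarrow> 'xi \<Rightarrow> 'b"
    and gfx :: "'a \<Rightarrow> 'b \<Rightarrow> 'a" and gfy :: "'a \<Rightarrow> 'b \<Rightarrow> 'b"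
    and D :: "'xi measure" and L \<sigma> :: real and M :: "'w measure" +
  fixes lam :: real and S2 m :: nat
    and X0 :: "'w \<Rightarrow> 'a \<times> 'b \<times> 'a \<times> 'b \<times> 'a"
    and \<xi> :: "nat \<Rightarrow> nat \<Rightarrow> 'w \<Rightarrow> 'xi"
  assumes S2_pos: "S2 \<ge> 1"
    and X0_meas: "X0 \<in> borel_measurable M"
    and X0_sq: "integrable M (\<lambda>\<omega>. norm (X0 \<omega>)^2)"
    and \<xi>_meas: "\<And>j i. \<xi> j i \<in> measurable M D"
    and \<xi>_distr: "\<And>j i. distr M D (\<xi> j i) = D"
    and \<xi>_indep: "indep_vars (\<lambda>_. D) (\<lambda>(j, i). \<xi> j i) ({..Suc m} \<times> {..<S2})"
    and X0_indep: "indep_set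
                     (sigma_sets (space M) {X0 -` A \<inter> space M | A. A \<in> sets borel})
                     (sigma_sets (space M) {(\<lambda>\<omega>. \<lambda>p\<in>{..Suc m} \<times> {..<S2}. \<xi> (fst p) (snd p) \<omega>) -` A \<inter> space M
                        | A. A \<in> sets (\<Pi>\<^sub>M p\<in>{..Suc m} \<times> {..<S2}. D)})"
begin

definition past_index :: "nat \<Rightarrow> (nat \<times> nat) set" where
  "past_index j = {..<j} \<times> {..<S2}"

definition past_samples :: "nat \<Rightarrow> 'w \<Rightarrow> nat \<times> nat \<Rightarrow> 'xi" where
  "past_samples j \<omega> = (\<lambda>p\<in>past_index j. \<xi> (fst p) (snd p) \<omega>)"

definition history_events :: "nat \<Rightarrow> 'w set set" where
  "history_events j = {X0 -` A \<inter> past_samples j -` B \<inter> space M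
     | A B. A \<in> sets borel \<and> B \<in> sets (\<Pi>\<^sub>M p\<in>past_index j. D)}"

definition history :: "nat \<Rightarrow> 'w measure" where
  "history j = sigma (space M) (history_events j)"

lemma past_samples_measurable: "past_samples j \<in> measurable M (\<Pi>\<^sub>M p\<in>past_index j. D)"
  unfolding past_samples_def by (intro measurable_restrict \<xi>_meas)

lemma history_eventsI:
  "A \<in> sets borel \<Longrightarrow> B \<in> sets (\<Pi>\<^sub>M p\<in>past_index j. D) \<Longrightarrow>
    X0 -` A \<inter> past_samples j -` B \<inter> space M \<in> history_events j"
  unfolding history_events_def by blast

lemma history_events_subset_events: "history_events j \<subseteq> events"
proof
  fix E assume "E \<in> history_events j"
  then obtain A B where A: "A \<in> sets borel" and B: "B \<in> sets (\<Pi>\<^sub>M p\<in>past_index j. D)"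
    and E: "E = (X0 -` A \<inter> space M) \<inter> (past_samples j -` B \<inter> space M)"
    unfolding history_events_def by blast
  show "E \<in> events"
    unfolding E using measurable_sets[OF X0_meas A] measurable_sets[OF past_samples_measurable B]
    by (rule sets.Int)
qed

lemma sets_history: "sets (history j) = sigma_sets (space M) (history_events j)"
  unfolding history_def using history_events_subset_events sets.sets_into_space
  by (intro sets_measure_of) blast

lemma space_history: "space (history j) = space M"
  unfolding history_def using history_events_subset_events sets.sets_into_space
  by (intro space_measure_of) blast

lemma measurable_from_history: "f \<in> measurable (history j) N \<Longrightarrow> f \<in> measurable M N"
proof (rule measurable_from_subalg)
  have "sigma_sets (space M) (history_events j) \<subseteq> events"
    using history_events_subset_events by (intro sets.sigma_sets_subset) auto
  then show "subalgebra M (history j)"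
    unfolding subalgebra_def sets_history space_history by simp
qed

lemma X0_measurable_history: "X0 \<in> borel_measurable (history j)"
proof (rule measurableI)
  fix A :: "('a \<times> 'b \<times> 'a \<times> 'b \<times> 'a) set" assume A: "A \<in> sets borel"
  have "X0 -` A \<inter> space M = X0 -` A \<inter> past_samples j -` space (\<Pi>\<^sub>M p\<in>past_index j. D) \<inter> space M"
    using measurable_space[OF past_samples_measurable] by blast
  also have "\<dots> \<in> history_events j" using A by (intro history_eventsI sets.top)
  finally show "X0 -` A \<inter> space (history j) \<in> sets (history j)"
    unfolding sets_history space_history by (rule sigma_sets.Basic)
qed simp

lemma \<xi>_measurable_history:
  assumes "a < j" "b < S2" shows "\<xi> a b \<in> measurable (history j) D"
proof (rule measurableI)
  fix x assume "x \<in> space (history j)" then show "\<xi> a b x \<in> space D"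
    using measurable_space[OF \<xi>_meas] space_history by auto
next
  fix C assume C: "C \<in> sets D"
  have ab: "(a, b) \<in> past_index j" using assms by (simp add: past_index_def)
  define B where "B = (\<lambda>f. f (a, b)) -` C \<inter> space (\<Pi>\<^sub>M p\<in>past_index j. D)"
  have B: "B \<in> sets (\<Pi>\<^sub>M p\<in>past_index j. D)"
    unfolding B_def using measurable_sets[OF measurable_component_singleton[OF ab] C] by simp
  have "\<xi> a b -` C \<inter> space M = X0 -` UNIV \<inter> past_samples j -` B \<inter> space M"
    using measurable_space[OF past_samples_measurable] ab
    by (auto simp: B_def past_samples_def)
  also have "\<dots> \<in> history_events j" using B by (intro history_eventsI) simp_all
  finally show "\<xi> a b -` C \<inter> space (history j) \<in> sets (history j)"
    unfolding sets_history space_history by (rule sigma_sets.Basic)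
qed

end

context sreda_inner_loop
begin

lemma prob_past_samples_indep_sample:
  assumes j: "j \<le> Suc m" and i: "i < S2"
    and B: "B \<in> sets (\<Pi>\<^sub>M p\<in>past_index j. D)" and C: "C \<in> sets D"
  shows "prob (past_samples j -` B \<inter> \<xi> j i -` C \<inter> space M)
       = prob (past_samples j -` B \<inter> space M) * prob (\<xi> j i -` C \<inter> space M)"
proof -
  define Y where "Y = (\<lambda>\<omega>. \<lambda>p\<in>{(j, i)}. \<xi> (fst p) (snd p) \<omega>)"
  have "indep_var (\<Pi>\<^sub>M p\<in>past_index j. D) (\<lambda>\<omega>. restrict (\<lambda>p. (\<lambda>(j, i). \<xi> j i) p \<omega>) (past_index j))
      (\<Pi>\<^sub>M p\<in>{(j, i)}. D) (\<lambda>\<omega>. restrict (\<lambda>p. (\<lambda>(j, i). \<xi> j i) p \<omega>) {(j, i)})"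
    using j i by (intro indep_var_restrict[OF \<xi>_indep]) (auto simp: past_index_def)
  then have ind: "indep_var (\<Pi>\<^sub>M p\<in>past_index j. D) (past_samples j) (\<Pi>\<^sub>M p\<in>{(j, i)}. D) Y"
    by (simp add: past_samples_def[abs_def] Y_def split_beta')
  define C' where "C' = (\<lambda>f. f (j, i)) -` C \<inter> space (\<Pi>\<^sub>M p\<in>{(j, i)}. D)"
  have C': "C' \<in> sets (\<Pi>\<^sub>M p\<in>{(j, i)}. D)"
    unfolding C'_def
    by (rule measurable_sets[OF measurable_component_singleton[of "(j, i)" "{(j, i)}" "\<lambda>_. D"] C]) simp
  have Y_meas: "Y \<in> measurable M (\<Pi>\<^sub>M p\<in>{(j, i)}. D)"
    unfolding Y_def by (intro measurable_restrict \<xi>_meas)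
  have Y_space: "\<omega> \<in> space M \<Longrightarrow> Y \<omega> \<in> space (\<Pi>\<^sub>M p\<in>{(j, i)}. D)" for \<omega>
    using measurable_space[OF Y_meas] by blast
  have "Y -` C' \<inter> space M = \<xi> j i -` C \<inter> space M"
    using Y_space unfolding C'_def by (auto simp: Y_def)
  moreover have "(\<lambda>\<omega>. (past_samples j \<omega>, Y \<omega>)) -` (B \<times> C') \<inter> space M = past_samples j -` B \<inter> \<xi> j i -` C \<inter> space M"
    using Y_space unfolding C'_def by (auto simp: Y_def)
  ultimately show ?thesis
    using indep_varD[OF ind B C'] by simp
qed

lemma prob_history_event_indep_sample:
  assumes j: "j \<le> Suc m" and i: "i < S2" and A: "A \<in> sets borel"
    and B: "B \<in> sets (\<Pi>\<^sub>M p\<in>past_index j. D)" and C: "C \<in> sets D"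
  shows "prob ((X0 -` A \<inter> past_samples j -` B \<inter> space M) \<inter> (\<xi> j i -` C \<inter> space M))
       = prob (X0 -` A \<inter> past_samples j -` B \<inter> space M) * prob (\<xi> j i -` C \<inter> space M)"
proof -
  define I where "I = {..Suc m} \<times> {..<S2}"
  define \<Phi> where "\<Phi> = (\<lambda>\<omega>. \<lambda>p\<in>I. \<xi> (fst p) (snd p) \<omega>)"
  have X0_indep_\<Phi>: "prob ((X0 -` A \<inter> space M) \<inter> (\<Phi> -` R \<inter> space M))
      = prob (X0 -` A \<inter> space M) * prob (\<Phi> -` R \<inter> space M)"
    if "R \<in> sets (\<Pi>\<^sub>M p\<in>I. D)" for R
    using A that unfolding \<Phi>_def I_def by (intro indep_setD[OF X0_indep] sigma_sets.Basic) blast+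
  have past_I: "past_index j \<subseteq> I" and ji: "(j, i) \<in> I"
    using j i by (auto simp: past_index_def I_def)
  have \<Phi>_meas: "\<Phi> \<in> measurable M (\<Pi>\<^sub>M p\<in>I. D)"
    unfolding \<Phi>_def by (intro measurable_restrict \<xi>_meas)
  have \<Phi>_space: "\<omega> \<in> space M \<Longrightarrow> \<Phi> \<omega> \<in> space (\<Pi>\<^sub>M p\<in>I. D)" for \<omega>
    using measurable_space[OF \<Phi>_meas] by blast
  \<comment> \<open>Both events are preimages under the vector \<open>\<Phi>\<close> of all samples, to which \<open>X0_indep\<close> applies.\<close>
  define R1 where "R1 = (\<lambda>f. restrict f (past_index j)) -` B \<inter> space (\<Pi>\<^sub>M p\<in>I. D)"
  define R2 where "R2 = R1 \<inter> ((\<lambda>f. f (j, i)) -` C \<inter> space (\<Pi>\<^sub>M p\<in>I. D))"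
  have R1: "R1 \<in> sets (\<Pi>\<^sub>M p\<in>I. D)"
    unfolding R1_def by (rule measurable_sets[OF measurable_restrict_subset[OF past_I] B])
  have R2: "R2 \<in> sets (\<Pi>\<^sub>M p\<in>I. D)"
    unfolding R2_def using R1 measurable_sets[OF measurable_component_singleton[OF ji] C] by (rule sets.Int)
  have restrict_\<Phi>: "restrict (\<Phi> \<omega>) (past_index j) = past_samples j \<omega>" for \<omega>
    using past_I by (auto simp: \<Phi>_def past_samples_def fun_eq_iff)
  have R1_pre: "\<Phi> -` R1 \<inter> space M = past_samples j -` B \<inter> space M"
    using \<Phi>_space restrict_\<Phi> by (auto simp: R1_def)
  have R2_pre: "\<Phi> -` R2 \<inter> space M = past_samples j -` B \<inter> \<xi> j i -` C \<inter> space M"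
    using \<Phi>_space restrict_\<Phi> ji by (auto simp: R2_def R1_def \<Phi>_def)
  have "(X0 -` A \<inter> past_samples j -` B \<inter> space M) \<inter> (\<xi> j i -` C \<inter> space M)
      = (X0 -` A \<inter> space M) \<inter> (\<Phi> -` R2 \<inter> space M)"
    unfolding R2_pre by blast
  then have joint: "prob ((X0 -` A \<inter> past_samples j -` B \<inter> space M) \<inter> (\<xi> j i -` C \<inter> space M))
      = prob (X0 -` A \<inter> space M) * (prob (past_samples j -` B \<inter> space M) * prob (\<xi> j i -` C \<inter> space M))"
    using X0_indep_\<Phi>[OF R2] prob_past_samples_indep_sample[OF j i B C] unfolding R2_pre by simp
  have "X0 -` A \<inter> past_samples j -` B \<inter> space M = (X0 -` A \<inter> space M) \<inter> (\<Phi> -` R1 \<inter> space M)"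
    unfolding R1_pre by blast
  then have marginal: "prob (X0 -` A \<inter> past_samples j -` B \<inter> space M)
      = prob (X0 -` A \<inter> space M) * prob (past_samples j -` B \<inter> space M)"
    using X0_indep_\<Phi>[OF R1] by (simp add: R1_pre)
  show ?thesis unfolding joint marginal by (simp add: mult.assoc)
qed

lemma prob_history_indep_sample:
  assumes j: "j \<le> Suc m" and i: "i < S2" and E: "E \<in> sets (history j)" and C: "C \<in> sets D"
  shows "prob (E \<inter> (\<xi> j i -` C \<inter> space M)) = prob E * prob (\<xi> j i -` C \<inter> space M)"
proof -
  define Zs where "Zs = {\<xi> j i -` C \<inter> space M | C. C \<in> sets D}"
  have "indep_set (history_events j) Zs"
    unfolding indep_sets2_eq
  proof (intro conjI ballI)
    show "history_events j \<subseteq> events" by (rule history_events_subset_events)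
    show "Zs \<subseteq> events" unfolding Zs_def using \<xi>_meas by (auto intro: measurable_sets)
    fix a b assume "a \<in> history_events j" and "b \<in> Zs"
    then show "prob (a \<inter> b) = prob a * prob b"
      unfolding history_events_def Zs_def using prob_history_event_indep_sample[OF j i] by blast
  qed
  moreover have "Int_stable (history_events j)"
  proof (rule Int_stableI)
    fix a b assume "a \<in> history_events j" and "b \<in> history_events j"
    then obtain A1 B1 A2 B2 where sets: "A1 \<in> sets borel" "B1 \<in> sets (\<Pi>\<^sub>M p\<in>past_index j. D)"
      "A2 \<in> sets borel" "B2 \<in> sets (\<Pi>\<^sub>M p\<in>past_index j. D)"
      and ab: "a \<inter> b = X0 -` (A1 \<inter> A2) \<inter> past_samples j -` (B1 \<inter> B2) \<inter> space M"
      unfolding history_events_def by blast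
    show "a \<inter> b \<in> history_events j"
      unfolding ab using sets by (intro history_eventsI sets.Int)
  qed
  moreover have "Int_stable Zs"
  proof (rule Int_stableI)
    fix a b assume "a \<in> Zs" and "b \<in> Zs"
    then obtain C1 C2 where "C1 \<in> sets D" "C2 \<in> sets D"
      and "a \<inter> b = \<xi> j i -` (C1 \<inter> C2) \<inter> space M"
      unfolding Zs_def by blast
    then show "a \<inter> b \<in> Zs" unfolding Zs_def by blast
  qed
  ultimately have "indep_set (sigma_sets (space M) (history_events j)) (sigma_sets (space M) Zs)"
    by (rule indep_set_sigma_sets)
  moreover have "E \<in> sigma_sets (space M) (history_events j)" using E by (simp add: sets_history)
  moreover have "\<xi> j i -` C \<inter> space M \<in> sigma_sets (space M) Zs"
    unfolding Zs_def using C by (intro sigma_sets.Basic) blast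
  ultimately show ?thesis by (rule indep_setD)
qed

lemma indep_sample_history:
  fixes W :: "'w \<Rightarrow> 'c::topological_space"
  assumes j: "j \<le> Suc m" and i: "i < S2" and W: "W \<in> borel_measurable (history j)"
  shows "indep_sample M W (\<xi> j i) D"
  unfolding indep_sample_def
proof (intro conjI ballI)
  show "W \<in> borel_measurable M" using measurable_from_history[OF W] .
  fix A :: "'c set" and B assume "A \<in> sets borel" and B: "B \<in> sets D"
  then have "W -` A \<inter> space M \<in> sets (history j)"
    using measurable_sets[OF W] by (simp add: space_history)
  then show "prob ((W -` A \<inter> space M) \<inter> (\<xi> j i -` B \<inter> space M))
      = prob (W -` A \<inter> space M) * prob (\<xi> j i -` B \<inter> space M)"
    by (rule prob_history_indep_sample[OF j i _ B])
qed (simp_all add: \<xi>_meas \<xi>_distr)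

end

context sreda_inner_loop
begin

definition "Xk \<omega> = fst (X0 \<omega>)"
definition "Yk \<omega> = fst (snd (X0 \<omega>))"
definition "Uk \<omega> = fst (snd (snd (snd (X0 \<omega>))))"
definition "Xk1 \<omega> = snd (snd (snd (snd (X0 \<omega>))))"

definition "Yt j \<omega> = (case X0 \<omega> of (xk, yk, vk, uk, x1) \<Rightarrow> sreda_y Gx Gy lam S2 (\<lambda>a b. \<xi> a b \<omega>) xk yk vk uk x1 j)"
definition "Ut j \<omega> = (case X0 \<omega> of (xk, yk, vk, uk, x1) \<Rightarrow> sreda_u Gx Gy lam S2 (\<lambda>a b. \<xi> a b \<omega>) xk yk vk uk x1 j)"

lemma Yt_0: "Yt 0 \<omega> = Yk \<omega>"
  by (simp add: Yt_def Yk_def split_beta sreda_y_0)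

lemma Ut_0: "Ut 0 \<omega> = Uk \<omega> + (1 / real S2) *\<^sub>R (\<Sum>i<S2. Gy (Xk1 \<omega>) (Yk \<omega>) (\<xi> 0 i \<omega>) - Gy (Xk \<omega>) (Yk \<omega>) (\<xi> 0 i \<omega>))"
  by (simp add: Ut_def Uk_def Xk1_def Xk_def Yk_def split_beta sreda_u_0)

lemma Yt_Suc: "Yt (Suc j) \<omega> = Yt j \<omega> + lam *\<^sub>R Ut j \<omega>"
  by (simp add: Yt_def Ut_def split_beta sreda_y_Suc)

lemma Ut_Suc: "Ut (Suc j) \<omega> = Ut j \<omega> + (1 / real S2) *\<^sub>R
    (\<Sum>i<S2. Gy (Xk1 \<omega>) (Yt (Suc j) \<omega>) (\<xi> (Suc j) i \<omega>) - Gy (Xk1 \<omega>) (Yt j \<omega>) (\<xi> (Suc j) i \<omega>))"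
  by (simp only: Yt_def Ut_def Xk1_def split_beta sreda_u_Suc)

lemma initial_data_measurable:
  assumes "X0 \<in> borel_measurable N"
  shows "Xk \<in> borel_measurable N" "Yk \<in> borel_measurable N" "Uk \<in> borel_measurable N"
    "Xk1 \<in> borel_measurable N"
  unfolding Xk_def Yk_def Uk_def Xk1_def using assms
  by (intro borel_measurable_fst' borel_measurable_snd'; assumption?)+

lemma iterates_measurable:
  assumes X0: "X0 \<in> borel_measurable N"
    and \<xi>: "\<And>a b. a \<le> j \<Longrightarrow> b < S2 \<Longrightarrow> \<xi> a b \<in> measurable N D"
  shows "Yt j \<in> borel_measurable N \<and> Ut j \<in> borel_measurable N \<and> Yt (Suc j) \<in> borel_measurable N"
  using \<xi>
proof (induction j)
  case 0
  have "Ut 0 \<in> borel_measurable N"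
    unfolding Ut_0[abs_def] using initial_data_measurable[OF X0] 0
    by (intro borel_measurable_add borel_measurable_scaleR borel_measurable_const borel_measurable_sum
        borel_measurable_diff Gy_measurable_comp) auto
  moreover have "Yt 0 \<in> borel_measurable N"
    unfolding Yt_0[abs_def] using initial_data_measurable[OF X0] by simp
  ultimately show ?case
    unfolding Yt_Suc[abs_def] by (auto intro: borel_measurable_add borel_measurable_scaleR)
next
  case (Suc j)
  then have IH: "Yt j \<in> borel_measurable N" "Ut j \<in> borel_measurable N" "Yt (Suc j) \<in> borel_measurable N"
    by auto
  have "Ut (Suc j) \<in> borel_measurable N"
    unfolding Ut_Suc[abs_def] using initial_data_measurable[OF X0] IH Suc.prems
    by (intro borel_measurable_add borel_measurable_scaleR borel_measurable_const borel_measurable_sum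
        borel_measurable_diff Gy_measurable_comp) auto
  with IH show ?case
    unfolding Yt_Suc[abs_def, of "Suc j"] by (auto intro: borel_measurable_add borel_measurable_scaleR)
qed

lemma iterates_measurable_history:
  "Yt j \<in> borel_measurable (history (Suc j)) \<and> Ut j \<in> borel_measurable (history (Suc j))
    \<and> Yt (Suc j) \<in> borel_measurable (history (Suc j))"
  by (rule iterates_measurable[OF X0_measurable_history]) (rule \<xi>_measurable_history, auto)

lemma initial_data_L2: "L2 M Xk" "L2 M Yk" "L2 M Uk" "L2 M Xk1"
proof -
  have "L2 M X0" using X0_meas X0_sq by (simp add: L2_def)
  then show "L2 M Xk" "L2 M Yk" "L2 M Uk" "L2 M Xk1"
    unfolding Xk_def Yk_def Uk_def Xk1_def by (intro L2_fst L2_snd; assumption?)+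
qed

lemma iterates_L2: "j \<le> Suc m \<Longrightarrow> L2 M (Yt j) \<and> L2 M (Ut j)"
proof (induction j)
  case 0
  have "(\<lambda>\<omega>. (Xk1 \<omega>, Yk \<omega>, Xk \<omega>, Yk \<omega>)) \<in> borel_measurable (history 0)"
    using initial_data_measurable[OF X0_measurable_history] by (intro borel_measurable_Pair) auto
  then have "L2 M (\<lambda>\<omega>. Gy (Xk1 \<omega>) (Yk \<omega>) (\<xi> 0 i \<omega>) - Gy (Xk \<omega>) (Yk \<omega>) (\<xi> 0 i \<omega>))" if "i < S2" for i
    using that by (intro L2_Gy_diff_indep_sample indep_sample_history initial_data_L2) auto
  then have "L2 M (Ut 0)"
    unfolding Ut_0[abs_def] by (intro L2_add L2_scaleR L2_sum initial_data_L2) auto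
  then show ?case using initial_data_L2 by (simp add: Yt_0[abs_def])
next
  case (Suc j)
  then have IH: "L2 M (Yt j)" "L2 M (Ut j)" by auto
  have Y: "L2 M (Yt (Suc j))" unfolding Yt_Suc[abs_def] using IH by (intro L2_add L2_scaleR)
  have "(\<lambda>\<omega>. (Xk1 \<omega>, Yt (Suc j) \<omega>, Xk1 \<omega>, Yt j \<omega>)) \<in> borel_measurable (history (Suc j))"
    using initial_data_measurable[OF X0_measurable_history] iterates_measurable_history[of j]
    by (intro borel_measurable_Pair) auto
  then have "L2 M (\<lambda>\<omega>. Gy (Xk1 \<omega>) (Yt (Suc j) \<omega>) (\<xi> (Suc j) i \<omega>) - Gy (Xk1 \<omega>) (Yt j \<omega>) (\<xi> (Suc j) i \<omega>))"
    if "i < S2" for i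
    using that Suc.prems by (intro L2_Gy_diff_indep_sample indep_sample_history initial_data_L2 IH Y) auto
  then have "L2 M (Ut (Suc j))"
    unfolding Ut_Suc[abs_def] by (intro L2_add L2_scaleR L2_sum IH) auto
  with Y show ?case by simp
qed

lemma L2_gfy_Yt: "j \<le> Suc m \<Longrightarrow> L2 M (\<lambda>\<omega>. gfy (Xk1 \<omega>) (Yt j \<omega>))"
  using iterates_L2 initial_data_L2 by (intro L2_gfy[OF finite_measure_axioms]) auto

end

context sreda_inner_loop
begin

definition "err j \<omega> = Ut j \<omega> - gfy (Xk1 \<omega>) (Yt j \<omega>)"

lemma increment_diff_eq_mean_noise_diff:
  "(Ut (Suc t) \<omega> - Ut t \<omega>) - (gfy (Xk1 \<omega>) (Yt (Suc t) \<omega>) - gfy (Xk1 \<omega>) (Yt t \<omega>))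
    = (1 / real S2) *\<^sub>R (\<Sum>i<S2. (Gy (Xk1 \<omega>) (Yt (Suc t) \<omega>) (\<xi> (Suc t) i \<omega>) - gfy (Xk1 \<omega>) (Yt (Suc t) \<omega>))
        - (Gy (Xk1 \<omega>) (Yt t \<omega>) (\<xi> (Suc t) i \<omega>) - gfy (Xk1 \<omega>) (Yt t \<omega>)))"
proof -
  have "real S2 \<noteq> 0" using S2_pos by simp
  then have mean: "gfy (Xk1 \<omega>) (Yt (Suc t) \<omega>) - gfy (Xk1 \<omega>) (Yt t \<omega>)
      = (1 / real S2) *\<^sub>R (\<Sum>i<S2. gfy (Xk1 \<omega>) (Yt (Suc t) \<omega>) - gfy (Xk1 \<omega>) (Yt t \<omega>))"
    by (simp add: sum_constant_scaleR)
  have "(\<Sum>i<S2. (Gy (Xk1 \<omega>) (Yt (Suc t) \<omega>) (\<xi> (Suc t) i \<omega>) - gfy (Xk1 \<omega>) (Yt (Suc t) \<omega>))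
        - (Gy (Xk1 \<omega>) (Yt t \<omega>) (\<xi> (Suc t) i \<omega>) - gfy (Xk1 \<omega>) (Yt t \<omega>)))
      = (\<Sum>i<S2. Gy (Xk1 \<omega>) (Yt (Suc t) \<omega>) (\<xi> (Suc t) i \<omega>) - Gy (Xk1 \<omega>) (Yt t \<omega>) (\<xi> (Suc t) i \<omega>))
        - (\<Sum>i<S2. gfy (Xk1 \<omega>) (Yt (Suc t) \<omega>) - gfy (Xk1 \<omega>) (Yt t \<omega>))"
    by (subst sum_subtractf[symmetric]) (rule sum.cong, auto simp: algebra_simps)
  then show ?thesis
    by (subst mean) (simp add: Ut_Suc scaleR_diff_right)
qed

lemma integral_inner_increment_diff_eq_0:
  assumes t: "Suc t \<le> Suc m"
    and B: "L2 M B" "B \<in> borel_measurable (history (Suc t))"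
  shows "(\<integral>\<omega>. B \<omega> \<bullet> ((Ut (Suc t) \<omega> - Ut t \<omega>) - (gfy (Xk1 \<omega>) (Yt (Suc t) \<omega>) - gfy (Xk1 \<omega>) (Yt t \<omega>))) \<partial>M) = 0"
proof -
  define T where "T = (\<lambda>i \<omega>. B \<omega> \<bullet> (Gy (Xk1 \<omega>) (Yt (Suc t) \<omega>) (\<xi> (Suc t) i \<omega>) - gfy (Xk1 \<omega>) (Yt (Suc t) \<omega>))
      - B \<omega> \<bullet> (Gy (Xk1 \<omega>) (Yt t \<omega>) (\<xi> (Suc t) i \<omega>) - gfy (Xk1 \<omega>) (Yt t \<omega>)))"
  have T: "integrable M (T i) \<and> integral\<^sup>L M (T i) = 0" if i: "i < S2" for i
  proof -
    have hist: "Xk1 \<in> borel_measurable (history (Suc t))"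
      "Yt t \<in> borel_measurable (history (Suc t))" "Yt (Suc t) \<in> borel_measurable (history (Suc t))"
      using initial_data_measurable[OF X0_measurable_history] iterates_measurable_history[of t] by auto
    have "indep_sample M (\<lambda>\<omega>. (B \<omega>, Xk1 \<omega>, Yt (Suc t) \<omega>)) (\<xi> (Suc t) i) D"
      and "indep_sample M (\<lambda>\<omega>. (B \<omega>, Xk1 \<omega>, Yt t \<omega>)) (\<xi> (Suc t) i) D"
      using B(2) hist by (auto intro!: indep_sample_history[OF t i] borel_measurable_Pair)
    from inner_Gy_noise_indep_sample[OF this(1) B(1)] inner_Gy_noise_indep_sample[OF this(2) B(1)]
    show ?thesis unfolding T_def by auto
  qed
  have "(\<integral>\<omega>. B \<omega> \<bullet> ((Ut (Suc t) \<omega> - Ut t \<omega>) - (gfy (Xk1 \<omega>) (Yt (Suc t) \<omega>) - gfy (Xk1 \<omega>) (Yt t \<omega>))) \<partial>M)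
      = (\<integral>\<omega>. (1 / real S2) * (\<Sum>i<S2. T i \<omega>) \<partial>M)"
    unfolding increment_diff_eq_mean_noise_diff T_def
    by (simp add: inner_sum_right inner_diff_right sum_subtractf)
  also have "\<dots> = (1 / real S2) * (\<Sum>i<S2. integral\<^sup>L M (T i))"
    using T by (subst Bochner_Integration.integral_sum[symmetric]) auto
  finally show ?thesis using T by simp
qed

lemma expectation_err_sq_Suc:
  assumes t: "Suc t \<le> Suc m"
  shows "(\<integral>\<omega>. (norm (err (Suc t) \<omega>))^2 \<partial>M) = (\<integral>\<omega>. (norm (err t \<omega>))^2 \<partial>M)
     + (\<integral>\<omega>. (norm (Ut (Suc t) \<omega> - Ut t \<omega>))^2 \<partial>M)
     - (\<integral>\<omega>. (norm (gfy (Xk1 \<omega>) (Yt (Suc t) \<omega>) - gfy (Xk1 \<omega>) (Yt t \<omega>)))^2 \<partial>M)"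
proof -
  define \<Delta> where "\<Delta> = (\<lambda>\<omega>. Ut (Suc t) \<omega> - Ut t \<omega>)"
  define \<delta> where "\<delta> = (\<lambda>\<omega>. gfy (Xk1 \<omega>) (Yt (Suc t) \<omega>) - gfy (Xk1 \<omega>) (Yt t \<omega>))"
  define B where "B = (\<lambda>\<omega>. err t \<omega> - \<delta> \<omega>)"
  have L2_err: "L2 M (err t)"
    unfolding err_def[abs_def] using t iterates_L2 L2_gfy_Yt by (intro L2_diff) auto
  have L2_\<Delta>: "L2 M \<Delta>"
    unfolding \<Delta>_def using t iterates_L2 by (intro L2_diff) auto
  have L2_\<delta>: "L2 M \<delta>"
    unfolding \<delta>_def using t L2_gfy_Yt by (intro L2_diff) auto
  have L2_B: "L2 M B"
    unfolding B_def using L2_err L2_\<delta> by (rule L2_diff)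
  have "B \<in> borel_measurable (history (Suc t))"
    unfolding B_def err_def \<delta>_def
    using initial_data_measurable[OF X0_measurable_history] iterates_measurable_history[of t]
    by (intro borel_measurable_diff gfy_measurable_comp) auto
  from integral_inner_increment_diff_eq_0[OF t L2_B this]
  have cross: "(\<integral>\<omega>. B \<omega> \<bullet> (\<Delta> \<omega> - \<delta> \<omega>) \<partial>M) = 0"
    by (simp add: \<Delta>_def \<delta>_def)
  have "err (Suc t) \<omega> = err t \<omega> + \<Delta> \<omega> - \<delta> \<omega>" for \<omega>
    by (simp add: err_def \<Delta>_def \<delta>_def algebra_simps)
  then have "(\<integral>\<omega>. (norm (err (Suc t) \<omega>))^2 \<partial>M)
      = (\<integral>\<omega>. (norm (err t \<omega>))^2 + (norm (\<Delta> \<omega>))^2 - (norm (\<delta> \<omega>))^2 + 2 * (B \<omega> \<bullet> (\<Delta> \<omega> - \<delta> \<omega>)) \<partial>M)"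
    by (simp add: norm_sq_add_diff B_def)
  also have "\<dots> = (\<integral>\<omega>. (norm (err t \<omega>))^2 \<partial>M) + (\<integral>\<omega>. (norm (\<Delta> \<omega>))^2 \<partial>M)
      - (\<integral>\<omega>. (norm (\<delta> \<omega>))^2 \<partial>M) + 2 * (\<integral>\<omega>. B \<omega> \<bullet> (\<Delta> \<omega> - \<delta> \<omega>) \<partial>M)"
    using L2_integrable_sq[OF L2_err] L2_integrable_sq[OF L2_\<Delta>] L2_integrable_sq[OF L2_\<delta>]
      L2_integrable_inner[OF L2_B L2_diff[OF L2_\<Delta> L2_\<delta>]]
    by simp
  finally show ?thesis unfolding cross by (simp add: \<Delta>_def \<delta>_def)
qed

lemma expectation_err_sq_telescope:
  "t \<le> Suc m \<Longrightarrow> (\<integral>\<omega>. (norm (err t \<omega>))^2 \<partial>M) = (\<integral>\<omega>. (norm (err 0 \<omega>))^2 \<partial>M)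
     - (\<Sum>j\<in>{1..t}. \<integral>\<omega>. (norm (gfy (Xk1 \<omega>) (Yt j \<omega>) - gfy (Xk1 \<omega>) (Yt (j - 1) \<omega>)))^2 \<partial>M)
     + (\<Sum>j\<in>{1..t}. \<integral>\<omega>. (norm (Ut j \<omega> - Ut (j - 1) \<omega>))^2 \<partial>M)"
proof (induction t)
  case 0 then show ?case by simp
next
  case (Suc t)
  have "{1..Suc t} = insert (Suc t) {1..t}" by auto
  with Suc expectation_err_sq_Suc[OF Suc.prems] show ?case by simp
qed

end

theorem lemma10:
  fixes F :: "'a::euclidean_space \<Rightarrow> 'b::euclidean_space \<Rightarrow> 'xi \<Rightarrow> real"
    and Gx :: "'a \<Rightarrow> 'b \<Rightarrow> 'xi \<Rightarrow> 'a" and Gy :: "'a \<Rightarrow> 'b \<Rightarrow> 'xi \<Rightarrow> 'b"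
    and gfx :: "'a \<Rightarrow> 'b \<Rightarrow> 'a" and gfy :: "'a \<Rightarrow> 'b \<Rightarrow> 'b"
    and D :: "'xi measure" and M :: "'w measure"
    and L \<mu> \<sigma> lam :: real and S2 m t :: nat
    and X0 :: "'w \<Rightarrow> 'a \<times> 'b \<times> 'a \<times> 'b \<times> 'a"
    and \<xi> :: "nat \<Rightarrow> nat \<Rightarrow> 'w \<Rightarrow> 'xi"
  assumes D_prob: "prob_space D"
    and F_int: "\<And>x y. integrable D (F x y)"
    and F_grad: "\<And>x y s. ((\<lambda>(x', y'). F x' y' s) has_derivative
                   (\<lambda>(h1, h2). Gx x y s \<bullet> h1 + Gy x y s \<bullet> h2)) (at (x, y))"
    and Gx_meas: "(\<lambda>(z, s). Gx (fst z) (snd z) s) \<in> borel_measurable (borel \<Otimes>\<^sub>M D)"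
    and Gy_meas: "(\<lambda>(z, s). Gy (fst z) (snd z) s) \<in> borel_measurable (borel \<Otimes>\<^sub>M D)"
    and f_grad: "\<And>x y. ((\<lambda>(x', y'). pop_obj D F x' y') has_derivative
                   (\<lambda>(h1, h2). gfx x y \<bullet> h1 + gfy x y \<bullet> h2)) (at (x, y))"
    and A2: "\<And>x y x' y'. (\<integral>\<^sup>+ s. ennreal (norm (Gx x y s - Gx x' y' s)^2 + norm (Gy x y s - Gy x' y' s)^2) \<partial>D)
                 \<le> ennreal (L^2 * (norm (x - x')^2 + norm (y - y')^2))"
    and A3: "\<And>x s. concave_on UNIV (\<lambda>y. F x y s)"
    and A4: "\<mu> > 0" "\<And>x. convex_on UNIV (\<lambda>y. - pop_obj D F x y - \<mu> / 2 * norm y ^ 2)"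
    and bdd_below: "\<exists>c. \<forall>x. c \<le> (SUP y. pop_obj D F x y)"
    and var: "\<And>x y. (\<integral>\<^sup>+ s. ennreal (norm (Gx x y s - gfx x y)^2 + norm (Gy x y s - gfy x y)^2) \<partial>D)
                 \<le> ennreal (\<sigma>^2)"
    and lam_pos: "lam > 0" and S2_pos: "S2 \<ge> 1"
    and M_prob: "prob_space M"
    and X0_meas: "X0 \<in> borel_measurable M"
    and X0_sq: "integrable M (\<lambda>\<omega>. norm (X0 \<omega>)^2)"
    and \<xi>_meas: "\<And>j i. \<xi> j i \<in> measurable M D"
    and \<xi>_distr: "\<And>j i. distr M D (\<xi> j i) = D"
    and \<xi>_indep: "prob_space.indep_vars M (\<lambda>_. D) (\<lambda>(j, i). \<xi> j i) ({..Suc m} \<times> {..<S2})"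
    and X0_indep: "prob_space.indep_set M
                     (sigma_sets (space M) {X0 -` A \<inter> space M | A. A \<in> sets borel})
                     (sigma_sets (space M) {(\<lambda>\<omega>. \<lambda>p\<in>{..Suc m} \<times> {..<S2}. \<xi> (fst p) (snd p) \<omega>) -` A \<inter> space M
                        | A. A \<in> sets (\<Pi>\<^sub>M p\<in>{..Suc m} \<times> {..<S2}. D)})"
    and t_range: "1 \<le> t" "t \<le> Suc m"
  shows
    "let xk1 = (\<lambda>\<omega>. snd (snd (snd (snd (X0 \<omega>)))));
         Y = (\<lambda>j \<omega>. case X0 \<omega> of (xk, yk, vk, uk, x1) \<Rightarrow>
                sreda_y Gx Gy lam S2 (\<lambda>a b. \<xi> a b \<omega>) xk yk vk uk x1 j);
         U = (\<lambda>j \<omega>. case X0 \<omega> of (xk, yk, vk, uk, x1) \<Rightarrow>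
                sreda_u Gx Gy lam S2 (\<lambda>a b. \<xi> a b \<omega>) xk yk vk uk x1 j);
         grad_g = (\<lambda>\<omega> y. - gfy (xk1 \<omega>) y);
         uhat = (\<lambda>j \<omega>. - U j \<omega>)
     in (\<integral>\<omega>. norm (grad_g \<omega> (Y t \<omega>) - uhat t \<omega>)^2 \<partial>M)
        = (\<integral>\<omega>. norm (grad_g \<omega> (Y 0 \<omega>) - uhat 0 \<omega>)^2 \<partial>M)
          - (\<Sum>j\<in>{1..t}. \<integral>\<omega>. norm (grad_g \<omega> (Y j \<omega>) - grad_g \<omega> (Y (j - 1) \<omega>))^2 \<partial>M)
          + (\<Sum>j\<in>{1..t}. \<integral>\<omega>. norm (uhat j \<omega> - uhat (j - 1) \<omega>)^2 \<partial>M)"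
proof -
  interpret sreda_inner_loop F Gx Gy gfx gfy D L \<sigma> M lam S2 m X0 \<xi>
    by (intro sreda_inner_loop.intro sampled_stochastic_gradient.intro stochastic_gradient_model.intro
        sreda_inner_loop_axioms.intro)
      (fact D_prob F_int F_grad Gy_meas f_grad A2 A3 var M_prob S2_pos X0_meas X0_sq \<xi>_meas \<xi>_distr
        \<xi>_indep X0_indep)+
  have "norm (- gfy (Xk1 \<omega>) (Yt j \<omega>) - - Ut j \<omega>) = norm (err j \<omega>)" for j \<omega>
    by (simp add: err_def)
  moreover have "norm (- v - - w) = norm (v - w)" for v w :: 'b
    by (simp add: norm_minus_commute)
  ultimately show ?thesis
    using expectation_err_sq_telescope[OF t_range(2)]
    unfolding Let_def Yt_def[symmetric] Ut_def[symmetric] Xk1_def[symmetric] by simp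
qed

end
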